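(* Let $(t_n(x))_{n\ge0}$ be the generalized Gončarov basis associated with $(\mathfrak d,\mathcal Z)$, $\mathcal Z=(z_i)_{i\ge0}$, and let $(p_n(x))_{n\ge0}$ be the basic sequence of $\mathfrak d$. Then for $n\ge1$, $$t_n(0)=\sum_{\rho\in\mathcal R[n]}(-1)^{|\rho|}\prod_{i=0}^{|\rho|-1}p_{b_{i+1}}(z_{s_i})=\sum_{\rho\in\mathcal R[n]}(-1)^{|\rho|}p_{b_1}(z_0)\,p_{b_2}(z_{s_1})\cdots p_{b_k}(z_{s_{k-1}}),$$ where for $\rho=(B_1,\dots,B_k)$ we write $k=|\rho|$, $b_i=|B_i|$, and $s_i=b_1+\cdots+b_i$ (with $s_0=0$).
   Context: $\mathbb K$ is a field of characteristic zero; a delta operator is a linear operator $\mathfrak d$ on $\mathbb K[x]$ commuting with all shifts $E_a:f(x)\mapsto f(x+a)$ and with $\mathfrak d(x)$ a nonzero constant; its basic sequence is the unique $(p_n)$ with $\deg p_n=n$, $p_0=1$, $p_n(0)=0$ ($n\ge1$), $\mathfrak dp_n=np_{n-1}$. $\varepsilon_z$ is evaluation at $z$. The generalized Gončarov basis associated with $(\mathfrak d,\mathcal Z)$ is the unique sequence $(t_n)_{n\ge0}$ with $\deg t_n=n$ and $\varepsilon_{z_i}(\mathfrak d^{\,i}(t_n))=n!\,\delta_{i,n}$ for all $i,n$. $\mathcal R[n]$ is the set of ordered partitions of $[n]=\{1,\dots,n\}$, i.e. ordered lists $(B_1,\dots,B_k)$ of pairwise disjoint nonempty subsets with union $[n]$.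 *)

theory Defs
  imports "HOL-Computational_Algebra.Polynomial"
begin

definition shift_op :: "'a::comm_ring_1 \<Rightarrow> 'a poly \<Rightarrow> 'a poly" where
  "shift_op a f = f \<circ>\<^sub>p [:a, 1:]"

definition delta_operator :: "('a::field_char_0 poly \<Rightarrow> 'a poly) \<Rightarrow> bool" where
  "delta_operator d \<longleftrightarrow>
     (\<forall>f g. d (f + g) = d f + d g) \<and>
     (\<forall>c f. d (smult c f) = smult c (d f)) \<and>
     (\<forall>a f. d (shift_op a f) = shift_op a (d f)) \<and>
     (\<exists>c. c \<noteq> 0 \<and> d [:0, 1:] = [:c:])"

definition basic_sequence :: "('a::field_char_0 poly \<Rightarrow> 'a poly) \<Rightarrow> (nat \<Rightarrow> 'a poly) \<Rightarrow> bool" where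
  "basic_sequence d p \<longleftrightarrow>
     (\<forall>n. degree (p n) = n) \<and> p 0 = 1 \<and>
     (\<forall>n\<ge>1. poly (p n) 0 = 0) \<and>
     d (p 0) = 0 \<and>
     (\<forall>n. d (p (Suc n)) = smult (of_nat (Suc n)) (p n))"

definition goncarov_basis ::
  "('a::field_char_0 poly \<Rightarrow> 'a poly) \<Rightarrow> (nat \<Rightarrow> 'a) \<Rightarrow> (nat \<Rightarrow> 'a poly) \<Rightarrow> bool" where
  "goncarov_basis d z t \<longleftrightarrow>
     (\<forall>n. degree (t n) = n) \<and>
     (\<forall>i n. poly ((d ^^ i) (t n)) (z i) = (if i = n then fact n else 0))"

definition ordered_partitions :: "nat \<Rightarrow> nat set list set" where
  "ordered_partitions n = {\<rho>. (\<forall>B\<in>set \<rho>. B \<noteq> {}) \<and>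
      (\<forall>i<length \<rho>. \<forall>j<length \<rho>. i \<noteq> j \<longrightarrow> \<rho> ! i \<inter> \<rho> ! j = {}) \<and>
      \<Union> (set \<rho>) = {1..n}}"

text \<open>Partial sums s_i = b_1 + ... + b_i (s_0 = 0), with b_{j+1} = card (\<rho> ! j).\<close>
definition part_sum :: "nat set list \<Rightarrow> nat \<Rightarrow> nat" where
  "part_sum \<rho> i = (\<Sum>j<i. card (\<rho> ! j))"

end

theory Submission
  imports Defs
begin

text \<open>Expand t_n = sum_k a_k p_k in the basic sequence, so that t_n(0) = a_0. Since
  d^i p_k = k!/(k-i)! p_(k-i), the conditions (d^i t_n)(z_i) = n! [i = n] say that the normalised
  coefficients u_k = a_k / (n choose k) satisfy u_n = 1 and the triangular recurrence
  sum_b ((n-i) choose b) p_b(z_i) u_(i+b) = 0 for i < n. The signed sum over ordered partitions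
  of an (n-i)-set satisfies the same recurrence: split off the first block, whose size b can be
  chosen in ((n-i) choose b) ways.\<close>

definition ordered_set_partitions :: "'b set \<Rightarrow> 'b set list set" where
  "ordered_set_partitions S = {\<rho>. (\<forall>B\<in>set \<rho>. B \<noteq> {}) \<and>
      (\<forall>i<length \<rho>. \<forall>j<length \<rho>. i \<noteq> j \<longrightarrow> \<rho> ! i \<inter> \<rho> ! j = {}) \<and>
      \<Union> (set \<rho>) = S}"

lemma ordered_partitions_eq: "ordered_partitions n = ordered_set_partitions {1..n}"
  by (simp add: ordered_partitions_def ordered_set_partitions_def)

lemma ordered_set_partitions_empty: "ordered_set_partitions {} = {[]}"
  by (auto simp: ordered_set_partitions_def)

lemma pairwise_disjoint_nth_Cons:
  "(\<forall>i<length (B # \<rho>). \<forall>j<length (B # \<rho>). i \<noteq> j \<longrightarrow> (B # \<rho>) ! i \<inter> (B # \<rho>) ! j = {}) \<longleftrightarrow>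
   (\<forall>C\<in>set \<rho>. B \<inter> C = {}) \<and> (\<forall>i<length \<rho>. \<forall>j<length \<rho>. i \<noteq> j \<longrightarrow> \<rho> ! i \<inter> \<rho> ! j = {})"
  (is "?L \<longleftrightarrow> ?R")
proof
  assume L: ?L
  have "B \<inter> \<rho> ! j = {}" if "j < length \<rho>" for j
    using L[rule_format, of 0 "Suc j"] that by simp
  moreover have "\<rho> ! i \<inter> \<rho> ! j = {}" if "i < length \<rho>" "j < length \<rho>" "i \<noteq> j" for i j
    using L[rule_format, of "Suc i" "Suc j"] that by simp
  ultimately show ?R by (force simp: in_set_conv_nth)
next
  assume R: ?R
  show ?L
  proof (intro allI impI)
    fix i j assume "i < length (B # \<rho>)" "j < length (B # \<rho>)" "i \<noteq> j"
    then show "(B # \<rho>) ! i \<inter> (B # \<rho>) ! j = {}"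
      using R by (cases i; cases j) (auto simp: Int_commute)
  qed
qed

lemma Cons_in_ordered_set_partitions_iff:
  "B # \<rho> \<in> ordered_set_partitions S \<longleftrightarrow>
   B \<noteq> {} \<and> B \<subseteq> S \<and> \<rho> \<in> ordered_set_partitions (S - B)"
  unfolding ordered_set_partitions_def mem_Collect_eq pairwise_disjoint_nth_Cons by auto

lemma ordered_set_partitions_nonempty:
  assumes "S \<noteq> {}"
  shows "ordered_set_partitions S =
    (\<lambda>(B, \<rho>). B # \<rho>) ` (SIGMA B:Pow S - {{}}. ordered_set_partitions (S - B))"
proof -
  have "[] \<notin> ordered_set_partitions S"
    using assms by (auto simp: ordered_set_partitions_def)
  then have "\<rho> \<in> ordered_set_partitions S \<longleftrightarrow> (\<exists>B \<rho>'. \<rho> = B # \<rho>' \<and> B # \<rho>' \<in> ordered_set_partitions S)" for \<rho>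
    by (cases \<rho>) auto
  then show ?thesis
    by (auto simp: Cons_in_ordered_set_partitions_iff image_iff)
qed

lemma finite_ordered_set_partitions:
  assumes "finite S"
  shows "finite (ordered_set_partitions S)"
  using assms
proof (induction "card S" arbitrary: S rule: less_induct)
  case less
  show ?case
  proof (cases "S = {}")
    case True
    then show ?thesis by (simp add: ordered_set_partitions_empty)
  next
    case False
    have "card (S - B) < card S" if "B \<in> Pow S - {{}}" for B
      using that less.prems by (intro psubset_card_mono) auto
    then have "finite (SIGMA B:Pow S - {{}}. ordered_set_partitions (S - B))"
      using less by (intro finite_SigmaI) auto
    then show ?thesis by (simp add: ordered_set_partitions_nonempty[OF False])
  qed
qed

text \<open>The offset i shifts the block positions, so that removing the first block B of a
  partition of S leaves a partition of S - B with offset i + card B.\<close>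

definition signed_partition_sum ::
  "(nat \<Rightarrow> nat \<Rightarrow> 'a::comm_ring_1) \<Rightarrow> nat set \<Rightarrow> nat \<Rightarrow> 'a" where
  "signed_partition_sum w S i = (\<Sum>\<rho>\<in>ordered_set_partitions S. (-1) ^ length \<rho> *
     (\<Prod>j<length \<rho>. w (card (\<rho> ! j)) (i + part_sum \<rho> j)))"

lemma signed_partition_sum_empty: "signed_partition_sum w {} i = 1"
  by (simp add: signed_partition_sum_def ordered_set_partitions_empty)

lemma part_sum_Cons: "part_sum (B # \<rho>) (Suc j) = card B + part_sum \<rho> j"
  unfolding part_sum_def by (subst sum.lessThan_Suc_shift) simp

lemma signed_partition_sum_rec:
  assumes "finite S" "S \<noteq> {}"
  shows "signed_partition_sum w S i =
    - (\<Sum>B\<in>Pow S - {{}}. w (card B) i * signed_partition_sum w (S - B) (i + card B))"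
proof -
  let ?term = "\<lambda>\<rho>. (-1) ^ length \<rho> * (\<Prod>j<length \<rho>. w (card (\<rho> ! j)) (i + part_sum \<rho> j))"
  have "signed_partition_sum w S i =
      (\<Sum>(B, \<rho>)\<in>(SIGMA B:Pow S - {{}}. ordered_set_partitions (S - B)). ?term (B # \<rho>))"
    unfolding signed_partition_sum_def ordered_set_partitions_nonempty[OF assms(2)]
    by (subst sum.reindex) (auto simp: inj_on_def case_prod_unfold)
  also have "\<dots> = (\<Sum>B\<in>Pow S - {{}}. \<Sum>\<rho>\<in>ordered_set_partitions (S - B). ?term (B # \<rho>))"
    using assms by (subst sum.Sigma) (auto simp: finite_ordered_set_partitions)
  also have "\<dots> = (\<Sum>B\<in>Pow S - {{}}. - (w (card B) i * signed_partition_sum w (S - B) (i + card B)))"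
    unfolding signed_partition_sum_def sum_distrib_left sum_negf[symmetric]
    by (simp only: length_Cons prod.lessThan_Suc_shift part_sum_Cons)
       (simp add: part_sum_def add.assoc mult_ac)
  finally show ?thesis by (simp add: sum_negf)
qed

lemma sum_Pow_card:
  assumes "finite S"
  shows "(\<Sum>B\<in>Pow S. h (card B)) = (\<Sum>b\<le>card S. of_nat (card S choose b) * (h b :: 'a::comm_ring_1))"
proof -
  have "(\<Sum>B\<in>Pow S. h (card B)) = (\<Sum>b\<le>card S. \<Sum>B\<in>{B\<in>Pow S. card B = b}. h (card B))"
    using assms by (intro sum.group[symmetric]) (auto intro: card_mono)
  also have "\<dots> = (\<Sum>b\<le>card S. of_nat (card S choose b) * h b)"
    using n_subsets[OF assms] by (intro sum.cong) auto
  finally show ?thesis .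
qed

lemma recurrence_solution_eq_signed_partition_sum:
  fixes w :: "nat \<Rightarrow> nat \<Rightarrow> 'a::comm_ring_1"
  assumes w0: "\<And>i. w 0 i = 1"
    and top: "u n = 1"
    and rec: "\<And>i. i < n \<Longrightarrow> (\<Sum>b\<le>n - i. of_nat ((n - i) choose b) * w b i * u (i + b)) = 0"
    and S: "finite S" "card S + i = n"
  shows "u i = signed_partition_sum w S i"
  using S
proof (induction "card S" arbitrary: S i rule: less_induct)
  case less
  show ?case
  proof (cases "S = {}")
    case True
    with less.prems show ?thesis by (simp add: top signed_partition_sum_empty)
  next
    case False
    let ?f = "\<lambda>b. of_nat (card S choose b) * (w b i * u (i + b))"
    have IH: "signed_partition_sum w (S - B) (i + card B) = u (i + card B)" if "B \<in> Pow S - {{}}" for B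
    proof -
      have "finite B" "B \<noteq> {}" "B \<subseteq> S" using that less.prems finite_subset by auto
      moreover have "card B \<le> card S" "card B > 0"
        using \<open>finite B\<close> \<open>B \<noteq> {}\<close> \<open>B \<subseteq> S\<close> less.prems by (auto simp: card_mono card_gt_0_iff)
      ultimately have "card (S - B) < card S" "card (S - B) + (i + card B) = n"
        using less.prems by (auto simp: card_Diff_subset)
      then show ?thesis using less less.prems by auto
    qed
    have "signed_partition_sum w S i = - (\<Sum>B\<in>Pow S - {{}}. w (card B) i * u (i + card B))"
      using IH less.prems by (simp add: signed_partition_sum_rec[OF _ False])
    also have "(\<Sum>B\<in>Pow S - {{}}. w (card B) i * u (i + card B)) =
        (\<Sum>B\<in>Pow S. w (card B) i * u (i + card B)) - u i"
      using less.prems by (simp add: sum_diff1 w0)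
    also have "(\<Sum>B\<in>Pow S. w (card B) i * u (i + card B)) = (\<Sum>b\<le>card S. ?f b)"
      using sum_Pow_card[OF \<open>finite S\<close>, of "\<lambda>b. w b i * u (i + b)"] by simp
    also have "\<dots> = 0"
    proof -
      have "i < n" "n - i = card S" using less.prems False by auto
      then show ?thesis using rec[of i] by (simp add: mult.assoc)
    qed
    finally show ?thesis by simp
  qed
qed

lemma delta_operator_zero:
  assumes "delta_operator d"
  shows "d 0 = 0"
proof -
  have "d (0 + 0) = d 0 + d 0" using assms by (simp only: delta_operator_def)
  then show ?thesis by simp
qed

lemma delta_operator_sum_smult:
  assumes "delta_operator d"
  shows "d (\<Sum>k\<in>A. smult (a k) (f k)) = (\<Sum>k\<in>A. smult (a k) (d (f k)))"
proof (induction A rule: infinite_finite_induct)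
  case (infinite A)
  then show ?case by (simp add: delta_operator_zero[OF assms])
next
  case empty
  then show ?case by (simp add: delta_operator_zero[OF assms])
next
  case (insert k A)
  then show ?case using assms by (simp add: delta_operator_def)
qed

lemma funpow_delta_operator_sum_smult:
  assumes "delta_operator d"
  shows "(d ^^ i) (\<Sum>k\<in>A. smult (a k) (f k)) = (\<Sum>k\<in>A. smult (a k) ((d ^^ i) (f k)))"
  by (induction i) (simp_all add: delta_operator_sum_smult[OF assms])

lemma funpow_delta_basic_sequence:
  assumes d: "delta_operator d" and p: "basic_sequence d p"
  shows "(d ^^ i) (p k) = (if i \<le> k then smult (fact k / fact (k - i)) (p (k - i)) else 0)"
proof (induction i)
  case 0
  then show ?case by simp
next
  case (Suc i)
  have d_smult: "d (smult c f) = smult c (d f)" for c f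
    using d by (simp add: delta_operator_def)
  have d_p0: "d (p 0) = 0" and d_pSuc: "d (p (Suc m)) = smult (of_nat (Suc m)) (p m)" for m
    using p unfolding basic_sequence_def by blast+
  consider "Suc i \<le> k" | "i = k" | "k < i" by linarith
  then show ?case
  proof cases
    case 1
    then obtain m where m: "k - i = Suc m" "k - Suc i = m"
      by (metis Suc_diff_Suc Suc_le_lessD diff_Suc_Suc)
    have "fact k / fact (Suc m) * of_nat (Suc m) = (fact k / fact m :: 'a)"
      by (simp add: divide_simps del: of_nat_Suc)
    then show ?thesis
      using Suc.IH 1 m by (simp add: d_smult d_pSuc smult_smult)
  next
    case 2
    then show ?thesis using Suc.IH by (simp add: d_smult d_p0)
  next
    case 3
    then show ?thesis using Suc.IH by (simp add: delta_operator_zero[OF d])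
  qed
qed

lemma degree_sequence_expansion:
  fixes p :: "nat \<Rightarrow> 'a::field poly"
  assumes deg: "\<And>k. degree (p k) = k" and p0: "p 0 \<noteq> 0" and f: "degree f \<le> m"
  shows "\<exists>a. f = (\<Sum>k\<le>m. smult (a k) (p k))"
  using f
proof (induction m arbitrary: f)
  case 0
  have "p 0 = [:coeff (p 0) 0:]" "coeff (p 0) 0 \<noteq> 0"
    using deg[of 0] p0 by (metis degree_0_id, metis leading_coeff_0_iff)
  moreover have "f = [:coeff f 0:]" using 0 by (simp add: degree_0_id)
  ultimately have "f = smult (coeff f 0 / coeff (p 0) 0) (p 0)"
    by (metis nonzero_divide_eq_eq smult_pCons smult_0_right)
  then show ?case by auto
next
  case (Suc m)
  have lc: "coeff (p (Suc m)) (Suc m) \<noteq> 0"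
    using deg[of "Suc m"] by (metis leading_coeff_0_iff nat.distinct(1) degree_0)
  define c where "c = coeff f (Suc m) / coeff (p (Suc m)) (Suc m)"
  have "degree (f - smult c (p (Suc m))) \<le> m"
  proof (rule degree_le, intro allI impI)
    fix j assume "m < j"
    then consider "j = Suc m" | "Suc m < j" by linarith
    then show "coeff (f - smult c (p (Suc m))) j = 0"
      by cases (use lc Suc.prems deg in \<open>simp_all add: c_def coeff_eq_0\<close>)
  qed
  then obtain a where "f - smult c (p (Suc m)) = (\<Sum>k\<le>m. smult (a k) (p k))"
    using Suc.IH by blast
  then have "f = (\<Sum>k\<le>Suc m. smult ((a(Suc m := c)) k) (p k))"
    by (simp add: algebra_simps)
  then show ?case by blast
qed

lemma poly_funpow_delta_basic_expansion:
  assumes d: "delta_operator d" and p: "basic_sequence d p" and "i \<le> n"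
  shows "poly ((d ^^ i) (\<Sum>k\<le>n. smult (a k) (p k))) x =
    (\<Sum>b\<le>n - i. a (i + b) * (fact (i + b) / fact b) * poly (p b) x)"
proof -
  have "poly ((d ^^ i) (\<Sum>k\<le>n. smult (a k) (p k))) x =
      (\<Sum>k\<in>{i..n}. a k * (fact k / fact (k - i)) * poly (p (k - i)) x)"
    unfolding funpow_delta_operator_sum_smult[OF d] funpow_delta_basic_sequence[OF d p] poly_sum
    by (rule sum.mono_neutral_cong_right) auto
  also have "\<dots> = (\<Sum>b\<le>n - i. a (i + b) * (fact (i + b) / fact b) * poly (p b) x)"
    using \<open>i \<le> n\<close> by (simp add: sum.atLeastAtMost_shift_0 atLeast0AtMost)
  finally show ?thesis .
qed

context
  fixes d :: "'a::field_char_0 poly \<Rightarrow> 'a poly" and z :: "nat \<Rightarrow> 'a" and p t :: "nat \<Rightarrow> 'a poly"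
    and a :: "nat \<Rightarrow> 'a" and n :: nat
  assumes d: "delta_operator d" and p: "basic_sequence d p" and t: "goncarov_basis d z t"
    and a: "t n = (\<Sum>k\<le>n. smult (a k) (p k))"
begin

lemma goncarov_evaluation_condition:
  assumes "i \<le> n"
  shows "(\<Sum>b\<le>n - i. a (i + b) * (fact (i + b) / fact b) * poly (p b) (z i)) =
    (if i = n then fact n else 0)"
proof -
  have "(\<Sum>b\<le>n - i. a (i + b) * (fact (i + b) / fact b) * poly (p b) (z i)) = poly ((d ^^ i) (t n)) (z i)"
    unfolding a by (rule poly_funpow_delta_basic_expansion[OF d p assms, symmetric])
  also have "\<dots> = (if i = n then fact n else 0)"
    using t unfolding goncarov_basis_def by blast
  finally show ?thesis .
qed

lemma goncarov_leading_coefficient: "a n = 1"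
  using goncarov_evaluation_condition[of n] p by (simp add: basic_sequence_def)

lemma goncarov_coefficient_recurrence:
  assumes "i < n"
  shows "(\<Sum>b\<le>n - i. of_nat ((n - i) choose b) * poly (p b) (z i) *
     (a (i + b) * fact (i + b) * fact (n - (i + b)) / fact n)) = 0"
proof -
  have "a (i + b) * (fact (i + b) / fact b) =
      fact n / fact (n - i) * (of_nat ((n - i) choose b) * (a (i + b) * fact (i + b) * fact (n - (i + b)) / fact n))"
    if "b \<le> n - i" for b
    using that by (simp add: binomial_fact field_simps)
  then have "(\<Sum>b\<le>n - i. a (i + b) * (fact (i + b) / fact b) * poly (p b) (z i)) = fact n / fact (n - i) *
      (\<Sum>b\<le>n - i. of_nat ((n - i) choose b) * poly (p b) (z i) * (a (i + b) * fact (i + b) * fact (n - (i + b)) / fact n))"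
    by (simp add: sum_distrib_left mult_ac)
  then show ?thesis
    using goncarov_evaluation_condition[of i] assms by simp
qed

end

theorem mainTheorem15:
  fixes d :: "'a::field_char_0 poly \<Rightarrow> 'a poly"
    and z :: "nat \<Rightarrow> 'a" and p t :: "nat \<Rightarrow> 'a poly" and n :: nat
  assumes "delta_operator d"
    and "basic_sequence d p"
    and "goncarov_basis d z t"
    and "n \<ge> 1"
  shows "poly (t n) 0 =
    (\<Sum>\<rho>\<in>ordered_partitions n. (-1) ^ length \<rho> *
       (\<Prod>i<length \<rho>. poly (p (card (\<rho> ! i))) (z (part_sum \<rho> i))))"
proof -
  obtain a where a: "t n = (\<Sum>k\<le>n. smult (a k) (p k))"
    using degree_sequence_expansion[of p "t n" n] assms(2,3)
    by (auto simp: basic_sequence_def goncarov_basis_def)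
  define u where "u k = a k * fact k * fact (n - k) / fact n" for k
  have "poly (t n) 0 = u 0"
    using assms(2) by (simp add: a poly_sum u_def basic_sequence_def sum.atMost_shift)
  also have "u 0 = signed_partition_sum (\<lambda>b i. poly (p b) (z i)) {1..n} 0"
    using goncarov_leading_coefficient[OF assms(1-3) a]
      goncarov_coefficient_recurrence[OF assms(1-3) a] assms(2)
    by (intro recurrence_solution_eq_signed_partition_sum[where n = n]) (auto simp: u_def basic_sequence_def)
  also have "\<dots> = (\<Sum>\<rho>\<in>ordered_partitions n. (-1) ^ length \<rho> *
       (\<Prod>i<length \<rho>. poly (p (card (\<rho> ! i))) (z (part_sum \<rho> i))))"
    by (simp add: signed_partition_sum_def ordered_partitions_eq)
  finally show ?thesis .
qed

end
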